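(* A topological space $X$ is set strongly star Menger if and only if every closed subspace of $X$ is strongly star Menger.
   Context: For a family $\mathcal U$ of subsets of $X$ and $A\subseteq X$, $st(A,\mathcal U)=\bigcup\{U\in\mathcal U: U\cap A\neq\emptyset\}$. A space $Y$ is strongly star Menger if for every sequence $(\mathcal U_n:n\in\omega)$ of open covers of $Y$ there are finite sets $F_n\subseteq Y$ with $Y=\bigcup_{n}st(F_n,\mathcal U_n)$. A space $X$ is set strongly star Menger if for every nonempty $A\subseteq X$ and every sequence $(\mathcal U_n:n\in\omega)$ of families of open subsets of $X$ with $\overline A\subseteq\bigcup\mathcal U_n$ for all $n$, there are finite sets $F_n\subseteq\overline A$ ($n\in\omega$) with $A\subseteq\bigcup_{n}st(F_n,\mathcal U_n)$. *)

theory Defs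
  imports "HOL-Analysis.Analysis"
begin

definition st :: "'a set \<Rightarrow> 'a set set \<Rightarrow> 'a set" where
  "st A \<U> = \<Union>{U \<in> \<U>. U \<inter> A \<noteq> {}}"

definition strongly_star_Menger :: "'a topology \<Rightarrow> bool" where
  "strongly_star_Menger Y \<longleftrightarrow>
     (\<forall>\<U> :: nat \<Rightarrow> 'a set set.
        (\<forall>n. (\<forall>U\<in>\<U> n. openin Y U) \<and> \<Union>(\<U> n) = topspace Y) \<longrightarrow>
        (\<exists>F :: nat \<Rightarrow> 'a set. (\<forall>n. finite (F n) \<and> F n \<subseteq> topspace Y) \<and>
           topspace Y = (\<Union>n. st (F n) (\<U> n))))"

definition set_strongly_star_Menger :: "'a topology \<Rightarrow> bool" where
  "set_strongly_star_Menger X \<longleftrightarrow>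
     (\<forall>A. A \<noteq> {} \<and> A \<subseteq> topspace X \<longrightarrow>
       (\<forall>\<U> :: nat \<Rightarrow> 'a set set.
          (\<forall>n. (\<forall>U\<in>\<U> n. openin X U) \<and> X closure_of A \<subseteq> \<Union>(\<U> n)) \<longrightarrow>
          (\<exists>F :: nat \<Rightarrow> 'a set. (\<forall>n. finite (F n) \<and> F n \<subseteq> X closure_of A) \<and>
             A \<subseteq> (\<Union>n. st (F n) (\<U> n)))))"

end

theory Submission
  imports Defs
begin

text \<open>Both properties amount to the same condition on the closed sets C of X: every
  sequence of families of open sets of X covering C admits finite sets inside C whose
  stars cover C. For the set version this is because A and its closure lie in the same
  closed set; for the subspace version, because relatively open sets of C are traces of
  open sets of X, and traces commute with stars of subsets of C.\<close>

definition strongly_star_Menger_in :: "'a topology \<Rightarrow> 'a set \<Rightarrow> bool" where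
  "strongly_star_Menger_in X C \<longleftrightarrow>
     (\<forall>\<U> :: nat \<Rightarrow> 'a set set.
        (\<forall>n. (\<forall>U\<in>\<U> n. openin X U) \<and> C \<subseteq> \<Union>(\<U> n)) \<longrightarrow>
        (\<exists>F :: nat \<Rightarrow> 'a set. (\<forall>n. finite (F n) \<and> F n \<subseteq> C) \<and>
           C \<subseteq> (\<Union>n. st (F n) (\<U> n))))"

lemma st_Int_image:
  assumes "F \<subseteq> C"
  shows "st F ((\<inter>) C ` \<U>) = C \<inter> st F \<U>"
  using assms by (auto simp: st_def)

lemma strongly_star_Menger_in_empty: "strongly_star_Menger_in X {}"
  unfolding strongly_star_Menger_in_def by (intro allI impI exI[of _ "\<lambda>n. {}"]) auto

lemma image_Int_lift_openin_subtopology: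
  assumes "\<forall>U\<in>\<U>. openin (subtopology X C) U"
  shows "(\<inter>) C ` {V. openin X V \<and> C \<inter> V \<in> \<U>} = \<U>"
proof
  show "\<U> \<subseteq> (\<inter>) C ` {V. openin X V \<and> C \<inter> V \<in> \<U>}"
  proof
    fix U assume "U \<in> \<U>"
    then obtain V where "openin X V" "U = C \<inter> V"
      using assms by (force simp: openin_subtopology)
    with \<open>U \<in> \<U>\<close> show "U \<in> (\<inter>) C ` {V. openin X V \<and> C \<inter> V \<in> \<U>}" by blast
  qed
qed auto

lemma strongly_star_Menger_subtopology_iff:
  assumes "C \<subseteq> topspace X"
  shows "strongly_star_Menger (subtopology X C) \<longleftrightarrow> strongly_star_Menger_in X C"
proof
  assume "strongly_star_Menger (subtopology X C)"
  note SSM = this[unfolded strongly_star_Menger_def topspace_subtopology_subset[OF assms]]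
  show "strongly_star_Menger_in X C"
    unfolding strongly_star_Menger_in_def
  proof (intro allI impI)
    fix \<U> :: "nat \<Rightarrow> 'a set set"
    assume \<U>: "\<forall>n. (\<forall>U\<in>\<U> n. openin X U) \<and> C \<subseteq> \<Union>(\<U> n)"
    have "\<forall>n. (\<forall>U\<in>(\<inter>) C ` \<U> n. openin (subtopology X C) U) \<and> \<Union>((\<inter>) C ` \<U> n) = C"
      using \<U> by (auto simp: openin_subtopology_Int2)
    then obtain F where F: "\<forall>n. finite (F n) \<and> F n \<subseteq> C"
      and cover: "C = (\<Union>n. st (F n) ((\<inter>) C ` \<U> n))"
      using SSM[THEN spec[where x="\<lambda>n. (\<inter>) C ` \<U> n"]] by blast
    have "C = (\<Union>n. C \<inter> st (F n) (\<U> n))"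
      using cover F by (simp add: st_Int_image)
    then have "C \<subseteq> (\<Union>n. st (F n) (\<U> n))"
      by blast
    with F show "\<exists>F. (\<forall>n. finite (F n) \<and> F n \<subseteq> C) \<and> C \<subseteq> (\<Union>n. st (F n) (\<U> n))"
      by blast
  qed
next
  assume SSM: "strongly_star_Menger_in X C"
  show "strongly_star_Menger (subtopology X C)"
    unfolding strongly_star_Menger_def topspace_subtopology_subset[OF assms]
  proof (intro allI impI)
    fix \<U> :: "nat \<Rightarrow> 'a set set"
    assume \<U>: "\<forall>n. (\<forall>U\<in>\<U> n. openin (subtopology X C) U) \<and> \<Union>(\<U> n) = C"
    define \<V> where "\<V> n = {V. openin X V \<and> C \<inter> V \<in> \<U> n}" for n
    have lift: "(\<inter>) C ` \<V> n = \<U> n" for n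
      unfolding \<V>_def using \<U> by (simp add: image_Int_lift_openin_subtopology)
    have "C \<subseteq> \<Union>(\<V> n)" for n
    proof -
      have "C = \<Union>((\<inter>) C ` \<V> n)"
        using lift \<U> by simp
      then show ?thesis by blast
    qed
    then have "\<forall>n. (\<forall>V\<in>\<V> n. openin X V) \<and> C \<subseteq> \<Union>(\<V> n)"
      by (simp add: \<V>_def)
    then obtain F where F: "\<forall>n. finite (F n) \<and> F n \<subseteq> C"
      and cover: "C \<subseteq> (\<Union>n. st (F n) (\<V> n))"
      using SSM[unfolded strongly_star_Menger_in_def, THEN spec[where x=\<V>]] by blast
    have st_\<U>: "st (F n) (\<U> n) = C \<inter> st (F n) (\<V> n)" for n
      using F st_Int_image[of "F n" C "\<V> n"] by (simp add: lift)
    have "C = (\<Union>n. C \<inter> st (F n) (\<V> n))"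
      using cover by blast
    then have "C = (\<Union>n. st (F n) (\<U> n))"
      by (simp add: st_\<U>)
    with F show "\<exists>F. (\<forall>n. finite (F n) \<and> F n \<subseteq> C) \<and> C = (\<Union>n. st (F n) (\<U> n))"
      by (intro exI[of _ F] conjI)
  qed
qed

lemma set_strongly_star_Menger_iff_closedin:
  "set_strongly_star_Menger X \<longleftrightarrow> (\<forall>C. closedin X C \<longrightarrow> strongly_star_Menger_in X C)"
proof (intro iffI allI impI)
  fix C
  assume SSSM: "set_strongly_star_Menger X" and C: "closedin X C"
  show "strongly_star_Menger_in X C"
  proof (cases "C = {}")
    case False
    then show ?thesis
      using SSSM[unfolded set_strongly_star_Menger_def, THEN spec[where x=C]] closedin_subset[OF C]
      by (simp add: strongly_star_Menger_in_def closure_of_closedin[OF C])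
  qed (simp add: strongly_star_Menger_in_empty)
next
  assume closed: "\<forall>C. closedin X C \<longrightarrow> strongly_star_Menger_in X C"
  show "set_strongly_star_Menger X"
    unfolding set_strongly_star_Menger_def
  proof (intro allI impI)
    fix A and \<U> :: "nat \<Rightarrow> 'a set set"
    assume A: "A \<noteq> {} \<and> A \<subseteq> topspace X"
      and \<U>: "\<forall>n. (\<forall>U\<in>\<U> n. openin X U) \<and> X closure_of A \<subseteq> \<Union>(\<U> n)"
    have "strongly_star_Menger_in X (X closure_of A)"
      using closed by simp
    then obtain F where F: "\<forall>n. finite (F n) \<and> F n \<subseteq> X closure_of A"
      and cover: "X closure_of A \<subseteq> (\<Union>n. st (F n) (\<U> n))"
      using \<U> unfolding strongly_star_Menger_in_def by (elim allE[where x=\<U>] impE) auto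
    have "A \<subseteq> X closure_of A"
      using A by (simp add: closure_of_subset)
    then have "A \<subseteq> (\<Union>n. st (F n) (\<U> n))"
      using cover by (rule subset_trans)
    with F show "\<exists>F. (\<forall>n. finite (F n) \<and> F n \<subseteq> X closure_of A) \<and>
                    A \<subseteq> (\<Union>n. st (F n) (\<U> n))"
      by (intro exI[of _ F] conjI)
  qed
qed

theorem proposition2p2:
  fixes X :: "'a topology"
  shows "set_strongly_star_Menger X \<longleftrightarrow>
         (\<forall>C. closedin X C \<longrightarrow> strongly_star_Menger (subtopology X C))"
  by (simp add: set_strongly_star_Menger_iff_closedin strongly_star_Menger_subtopology_iff
      closedin_subset)

end
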